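(* Let $p_0<1$. For each $n$ let $(C_{n,i})_{i\ge1}$ be independent events with $P(C_{n,i})\le p_0$ for all $i$. Suppose there is a random variable $M^*$ with values in $\{0,1,2,\dots;\infty\}$ such that $\sum_i\mathbf 1_{C_{n,i}}\to M^*$ in distribution on $\{0,1,2,\dots;\infty\}$ (with its one-point compactification topology) as $n\to\infty$. Then either $P(M^*=0)>0$ or $P(M^*=\infty)=1$. *)

theory Defs
  imports "HOL-Probability.Probability"
begin

text \<open>Number of events among C 0, C 1, ... that occur at outcome w, as an element of
  {0,1,2,...} \<union> {\<infinity>} (type enat); this is the sum of the indicators.\<close>
definition count_events :: "(nat \<Rightarrow> 'a set) \<Rightarrow> 'a \<Rightarrow> enat" where
  "count_events C w =
     (if finite {i. w \<in> C i} then enat (card {i. w \<in> C i}) else \<infinity>)"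

text \<open>Convergence in distribution of random variables S n (on probability spaces M n)
  to X (on probability space N), all with values in enat, where enat carries its order
  topology, i.e. the one-point compactification of the discrete space of naturals:
  expectations of every bounded continuous real function converge (continuous
  functions on this compact space are automatically bounded).\<close>
definition conv_distr_enat ::
  "(nat \<Rightarrow> 'a measure) \<Rightarrow> (nat \<Rightarrow> 'a \<Rightarrow> enat) \<Rightarrow> 'b measure \<Rightarrow> ('b \<Rightarrow> enat) \<Rightarrow> bool" where
  "conv_distr_enat M S N X \<longleftrightarrow>
     (\<forall>f :: enat \<Rightarrow> real. continuous_on UNIV f \<longrightarrow> bounded (range f) \<longrightarrow>
        (\<lambda>n. \<integral>w. f (S n w) \<partial>M n) \<longlonglongrightarrow> (\<integral>w. f (X w) \<partial>N))"

end

theory Submission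
  imports Defs
begin

(*
  Fix n, write N for the number of events C i = C n i that occur, and let
  s = (1 + p0) / 2.  For every m, independence gives
    E (prod_{i<m} (1 - s 1_{C i})) = prod_{i<m} (1 - s P(C i)),
  and the integrand is at least (1 - s)^k on the event N = k.  Since 2 s - 1 = p0, one has
  (1 - s x)^2 <= 1 - x for 0 <= x <= p0, so squaring gives
    ((1 - s)^k P(N = k))^2 <= prod_{i<m} (1 - P(C i)) = P(no C i with i < m),
  which tends to P(N = 0) as m grows.  Every finite k is an isolated point of
  {0, 1, 2, ...; infinity}, so P(N_n = k) converges to P(M* = k); hence P(M* = 0) = 0
  forces P(M* = k) = 0 for all finite k, i.e. M* is infinite almost surely.
*)

lemma continuous_on_indicator_clopen:
  assumes "open S" "closed S"
  shows "continuous_on UNIV (indicator S :: 'a::topological_space \<Rightarrow> real)"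
proof -
  have "indicator S -` B = (if 1 \<in> B then S else {}) \<union> (if 0 \<in> B then - S else {})"
    for B :: "real set"
    by (auto simp: indicator_def of_bool_def split: if_split_asm)
  then show ?thesis
    using assms by (auto simp: continuous_on_open_vimage open_Compl)
qed

lemma count_events_eq_enat_iff:
  "count_events C w = enat k \<longleftrightarrow>
     (\<exists>m. (\<forall>j\<ge>m. w \<notin> C j) \<and> (\<Sum>i<m. indicator (C i) w) = k)"
proof
  assume "count_events C w = enat k"
  then have fin: "finite {i. w \<in> C i}" and card: "card {i. w \<in> C i} = k"
    by (auto simp: count_events_def split: if_splits)
  obtain m where m: "{i. w \<in> C i} \<subseteq> {..<m}"
    using finite_nat_bounded[OF fin] by blast
  then have "{..<m} \<inter> {i. w \<in> C i} = {i. w \<in> C i}"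
    by blast
  then have "(\<Sum>i<m. indicator (C i) w) = k"
    using card by (simp add: indicator_def)
  moreover have "\<forall>j\<ge>m. w \<notin> C j"
    using m by fastforce
  ultimately show "\<exists>m. (\<forall>j\<ge>m. w \<notin> C j) \<and> (\<Sum>i<m. indicator (C i) w) = k"
    by blast
next
  assume "\<exists>m. (\<forall>j\<ge>m. w \<notin> C j) \<and> (\<Sum>i<m. indicator (C i) w) = k"
  then obtain m where m: "\<forall>j\<ge>m. w \<notin> C j" and sum: "(\<Sum>i<m. indicator (C i) w) = k"
    by blast
  then have eq: "{..<m} \<inter> {i. w \<in> C i} = {i. w \<in> C i}"
    using not_le by blast
  then have "finite {i. w \<in> C i}"
    by (metis finite_Int finite_lessThan)
  with sum eq show "count_events C w = enat k"
    by (simp add: count_events_def indicator_def)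
qed

lemma count_events_eq_0_iff: "count_events C w = 0 \<longleftrightarrow> (\<forall>i. w \<notin> C i)"
  by (auto simp: count_events_def zero_enat_def) (metis Collect_empty_eq finite.emptyI)

lemma measurable_count_events:
  assumes "\<And>i. C i \<in> sets M"
  shows "count_events C \<in> M \<rightarrow>\<^sub>M count_space UNIV"
proof -
  note assms[measurable]
  have finite_value: "{w\<in>space M. count_events C w = enat k} \<in> sets M" for k
    unfolding count_events_eq_enat_iff by measurable
  have "{w\<in>space M. count_events C w = \<infinity>}
      = space M - (\<Union>k. {w\<in>space M. count_events C w = enat k})"
    by (auto simp: not_infinity_eq)
  then have infinite_value: "{w\<in>space M. count_events C w = \<infinity>} \<in> sets M"
    using finite_value by (simp add: sets.Diff sets.countable_UN)
  show ?thesis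
    unfolding measurable_count_space_eq_countable[OF countableI_type]
  proof (intro conjI ballI)
    fix a :: enat
    have "count_events C -` {a} \<inter> space M = {w\<in>space M. count_events C w = a}"
      by auto
    then show "count_events C -` {a} \<inter> space M \<in> sets M"
      using finite_value infinite_value by (cases a) simp_all
  qed simp
qed

lemma count_events_pow_le_prod:
  fixes s :: real
  assumes "0 \<le> s" "s \<le> 1" and "count_events C w = enat k"
  shows "(1 - s) ^ k \<le> (\<Prod>i<m. 1 - s * of_bool (w \<in> C i))"
proof -
  have "finite {i. w \<in> C i}" and card: "card {i. w \<in> C i} = k"
    using assms(3) by (auto simp: count_events_def split: if_splits)
  then have "card {i\<in>{..<m}. w \<in> C i} \<le> k"
    by (metis (no_types, lifting) card_mono mem_Collect_eq subsetI)
  then have "(1 - s) ^ k \<le> (\<Prod>i\<in>{i\<in>{..<m}. w \<in> C i}. 1 - s)"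
    using assms(1,2) by (simp add: power_decreasing)
  also have "\<dots> = (\<Prod>i<m. if w \<in> C i then 1 - s else 1)"
    by (rule prod.inter_filter) simp
  also have "\<dots> = (\<Prod>i<m. 1 - s * of_bool (w \<in> C i))"
    by (intro prod.cong) auto
  finally show ?thesis .
qed

lemma (in prob_space) indep_events_imp_indep_vars_mem:
  assumes "indep_events C I"
  shows "indep_vars (\<lambda>_. count_space UNIV) (\<lambda>i w. w \<in> C i) I"
proof -
  have events: "C i \<in> events" if "i \<in> I" for i
    using assms that by (auto simp: indep_events_def)
  have "indep_sets (\<lambda>i. sigma_sets (space M) {C i}) I"
    using assms unfolding indep_events_def_alt by (rule indep_sets_sigma) (simp add: Int_stable_def)
  then have
    "indep_sets (\<lambda>i. {(\<lambda>w. w \<in> C i) -` A \<inter> space M | A. A \<in> sets (count_space UNIV)}) I"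
  proof (rule indep_sets_mono_sets)
    fix i assume "i \<in> I"
    then have sub: "C i \<subseteq> space M"
      using events sets.sets_into_space by blast
    have "(\<lambda>w. w \<in> C i) -` A \<inter> space M \<in> sigma_sets (space M) {C i}" for A
    proof -
      have "(\<lambda>w. w \<in> C i) -` A \<inter> space M
          = (if True \<in> A then C i else {}) \<union> (if False \<in> A then space M - C i else {})"
      proof (intro set_eqI)
        fix w show "w \<in> (\<lambda>w. w \<in> C i) -` A \<inter> space M \<longleftrightarrow>
            w \<in> (if True \<in> A then C i else {}) \<union> (if False \<in> A then space M - C i else {})"
          using sub by (cases "w \<in> C i") auto
      qed
      also have "\<dots> \<in> {{}, C i, space M - C i, space M}"
        using sub by (simp add: Un_absorb1)
      also have "\<dots> = sigma_sets (space M) {C i}"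
        using sub by (rule sigma_sets_singleton[symmetric])
      finally show ?thesis .
    qed
    then show "{(\<lambda>w. w \<in> C i) -` A \<inter> space M | A. A \<in> sets (count_space UNIV)}
        \<subseteq> sigma_sets (space M) {C i}"
      by auto
  qed
  with events show ?thesis
    unfolding indep_vars_def2 by (simp add: measurable_count_space_eq_countable)
qed

lemma (in prob_space) expectation_of_mem_event:
  fixes f :: "bool \<Rightarrow> real"
  assumes "A \<in> events"
  shows "integrable M (\<lambda>w. f (w \<in> A))"
    and "expectation (\<lambda>w. f (w \<in> A)) = f True * prob A + f False * (1 - prob A)"
proof -
  have eq: "(\<lambda>w. f (w \<in> A)) = (\<lambda>w. f False + (f True - f False) * indicator A w)"
    by (auto simp: indicator_def)
  show "integrable M (\<lambda>w. f (w \<in> A))"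
    unfolding eq using assms by (auto simp: emeasure_eq_measure)
  show "expectation (\<lambda>w. f (w \<in> A)) = f True * prob A + f False * (1 - prob A)"
    unfolding eq using assms by (simp add: emeasure_eq_measure prob_space algebra_simps)
qed

lemma (in prob_space) expectation_prod_indep_events:
  fixes f :: "'i \<Rightarrow> bool \<Rightarrow> real"
  assumes indep: "indep_events C I" and "finite J" "J \<subseteq> I"
  shows "integrable M (\<lambda>w. \<Prod>i\<in>J. f i (w \<in> C i))"
    and "expectation (\<lambda>w. \<Prod>i\<in>J. f i (w \<in> C i))
           = (\<Prod>i\<in>J. f i True * prob (C i) + f i False * (1 - prob (C i)))"
proof -
  have events: "C i \<in> events" if "i \<in> J" for i
    using indep that \<open>J \<subseteq> I\<close> by (auto simp: indep_events_def)
  have "indep_vars (\<lambda>_. borel) (\<lambda>i w. f i (w \<in> C i)) I"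
    by (rule indep_vars_compose2[OF indep_events_imp_indep_vars_mem[OF indep]]) simp
  then have vars: "indep_vars (\<lambda>_. borel) (\<lambda>i w. f i (w \<in> C i)) J"
    using \<open>J \<subseteq> I\<close> by (rule indep_vars_subset)
  show "integrable M (\<lambda>w. \<Prod>i\<in>J. f i (w \<in> C i))"
    using events by (intro indep_vars_integrable[OF \<open>finite J\<close> vars] expectation_of_mem_event)
  have "expectation (\<lambda>w. \<Prod>i\<in>J. f i (w \<in> C i))
      = (\<Prod>i\<in>J. expectation (\<lambda>w. f i (w \<in> C i)))"
    using events by (intro indep_vars_lebesgue_integral[OF \<open>finite J\<close> vars] expectation_of_mem_event)
  also have "\<dots> = (\<Prod>i\<in>J. f i True * prob (C i) + f i False * (1 - prob (C i)))"
    using events expectation_of_mem_event(2) by simp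
  finally show "expectation (\<lambda>w. \<Prod>i\<in>J. f i (w \<in> C i))
      = (\<Prod>i\<in>J. f i True * prob (C i) + f i False * (1 - prob (C i)))" .
qed

lemma (in prob_space) prob_count_events_le_prod:
  fixes s :: real
  assumes indep: "indep_events C UNIV" and "0 \<le> s" "s \<le> 1"
  shows "(1 - s) ^ k * prob {w\<in>space M. count_events C w = enat k}
           \<le> (\<Prod>i<m. 1 - s * prob (C i))"
proof -
  have events: "C i \<in> events" for i
    using indep by (auto simp: indep_events_def)
  note measurable_count_events[OF events, measurable]
  define E where "E = {w\<in>space M. count_events C w = enat k}"
  have "E \<in> events"
    unfolding E_def by measurable
  then have "(1 - s) ^ k * prob E = expectation (\<lambda>w. (1 - s) ^ k * indicator E w)"
    by simp
  also have "\<dots> \<le> expectation (\<lambda>w. \<Prod>i<m. 1 - s * of_bool (w \<in> C i))"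
  proof (rule integral_mono)
    show "integrable M (\<lambda>w. (1 - s) ^ k * indicator E w)"
      using \<open>E \<in> events\<close> by (simp add: emeasure_eq_measure)
    show "integrable M (\<lambda>w. \<Prod>i<m. 1 - s * of_bool (w \<in> C i))"
      using indep by (rule expectation_prod_indep_events) auto
    show "(1 - s) ^ k * indicator E w \<le> (\<Prod>i<m. 1 - s * of_bool (w \<in> C i))" for w
      using assms(2,3) count_events_pow_le_prod[of s C w k m]
      by (cases "w \<in> E") (auto simp: E_def intro: prod_nonneg)
  qed
  also have "\<dots> = (\<Prod>i<m. 1 - s * prob (C i))"
    using expectation_prod_indep_events(2)[OF indep, of "{..<m}" "\<lambda>_ b. 1 - s * of_bool b"]
    by (simp add: algebra_simps)
  finally show ?thesis
    unfolding E_def .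
qed

lemma (in prob_space) prod_tendsto_prob_count_events_0:
  assumes indep: "indep_events C UNIV"
  shows "(\<lambda>m. \<Prod>i<m. 1 - prob (C i)) \<longlonglongrightarrow> prob {w\<in>space M. count_events C w = 0}"
proof -
  have events: "C i \<in> events" for i
    using indep by (auto simp: indep_events_def)
  define A where "A m = space M - (\<Union>i<m. C i)" for m
  have A_events: "A m \<in> events" for m
    unfolding A_def using events by auto
  have "prob (A m) = (\<Prod>i<m. 1 - prob (C i))" for m
  proof -
    have "prob (A m) = expectation (indicator (A m))"
      using A_events by simp
    also have "\<dots> = expectation (\<lambda>w. \<Prod>i<m. of_bool (w \<notin> C i))"
      by (intro Bochner_Integration.integral_cong) (auto simp: A_def indicator_def)
    also have "\<dots> = (\<Prod>i<m. 1 - prob (C i))"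
      using expectation_prod_indep_events(2)[OF indep, of "{..<m}" "\<lambda>_ b. of_bool (\<not> b)"]
      by simp
    finally show ?thesis .
  qed
  then have "(\<lambda>m. \<Prod>i<m. 1 - prob (C i)) = (\<lambda>m. prob (A m))"
    by simp
  also have "\<dots> \<longlonglongrightarrow> prob (\<Inter>m. A m)"
    using A_events by (intro finite_Lim_measure_decseq) (auto simp: decseq_def A_def)
  also have "(\<Inter>m. A m) = {w\<in>space M. count_events C w = 0}"
    by (auto simp: A_def count_events_eq_0_iff)
  finally show ?thesis .
qed

lemma (in prob_space) prob_count_events_eq_bound:
  assumes indep: "indep_events C UNIV" and p: "\<And>i. prob (C i) \<le> p" and "p < 1"
  shows "(((1 - p) / 2) ^ k * prob {w\<in>space M. count_events C w = enat k})\<^sup>2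
           \<le> prob {w\<in>space M. count_events C w = 0}"
proof -
  define s where "s = (1 + p) / 2"
  have "0 \<le> p"
    using p[of 0] measure_nonneg order_trans by blast
  then have s: "0 \<le> s" "s \<le> 1" and one_minus_s: "1 - s = (1 - p) / 2"
    using \<open>p < 1\<close> by (simp_all add: s_def field_simps)
  have square_le: "(1 - s * prob (C i))\<^sup>2 \<le> 1 - prob (C i)" for i
  proof -
    have "(1 - s * x)\<^sup>2 - (1 - x) = x * (s\<^sup>2 * x - p)" for x
      by (simp add: s_def power2_eq_square algebra_simps)
    moreover have "s\<^sup>2 * prob (C i) \<le> p"
      using s p[of i]
      by (metis measure_nonneg mult_left_le_one_le order_trans power_le_one zero_le_power2)
    ultimately show ?thesis
      by (smt (verit) measure_nonneg mult_nonneg_nonpos)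
  qed
  have "((1 - s) ^ k * prob {w\<in>space M. count_events C w = enat k})\<^sup>2
      \<le> (\<Prod>i<m. 1 - prob (C i))" for m
  proof -
    have "((1 - s) ^ k * prob {w\<in>space M. count_events C w = enat k})\<^sup>2
        \<le> (\<Prod>i<m. 1 - s * prob (C i))\<^sup>2"
      using s by (intro power_mono prob_count_events_le_prod[OF indep]) auto
    also have "\<dots> = (\<Prod>i<m. (1 - s * prob (C i))\<^sup>2)"
      by (rule prod_power_distrib)
    also have "\<dots> \<le> (\<Prod>i<m. 1 - prob (C i))"
      using square_le by (intro prod_mono) auto
    finally show ?thesis .
  qed
  then show ?thesis
    unfolding one_minus_s[symmetric]
    using LIMSEQ_le_const[OF prod_tendsto_prob_count_events_0[OF indep]] by blast
qed

lemma (in prob_space) integral_indicator_singleton: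
  assumes "X \<in> M \<rightarrow>\<^sub>M count_space UNIV"
  shows "(\<integral>w. indicator {a} (X w) \<partial>M) = prob {w\<in>space M. X w = a}"
proof -
  have "{w\<in>space M. X w = a} \<in> events"
    using assms by measurable
  have "(\<integral>w. indicator {a} (X w) \<partial>M) = expectation (indicator {w\<in>space M. X w = a})"
    by (intro Bochner_Integration.integral_cong) (auto simp: indicator_def)
  also have "\<dots> = prob {w\<in>space M. X w = a}"
    using \<open>{w\<in>space M. X w = a} \<in> events\<close> by simp
  finally show ?thesis .
qed

lemma conv_distr_enat_tendsto_prob:
  assumes "conv_distr_enat M S N X"
    and "\<And>n. prob_space (M n)" "\<And>n. S n \<in> M n \<rightarrow>\<^sub>M count_space UNIV"
    and "prob_space N" "X \<in> N \<rightarrow>\<^sub>M count_space UNIV"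
  shows "(\<lambda>n. measure (M n) {w\<in>space (M n). S n w = enat k})
           \<longlonglongrightarrow> measure N {w\<in>space N. X w = enat k}"
proof -
  have "range (indicator {enat k} :: enat \<Rightarrow> real) \<subseteq> {0, 1}"
    by (auto simp: indicator_def)
  then have "bounded (range (indicator {enat k} :: enat \<Rightarrow> real))"
    by (rule bounded_subset[OF finite_imp_bounded, rotated]) simp
  moreover have "continuous_on UNIV (indicator {enat k} :: enat \<Rightarrow> real)"
    by (rule continuous_on_indicator_clopen) (auto simp: open_enat)
  ultimately have "(\<lambda>n. \<integral>w. indicator {enat k} (S n w) \<partial>M n)
      \<longlonglongrightarrow> (\<integral>w. (indicator {enat k} (X w) :: real) \<partial>N)"
    using assms(1) by (simp add: conv_distr_enat_def)
  moreover have "(\<integral>w. (indicator {enat k} (S n w) :: real) \<partial>M n)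
      = measure (M n) {w\<in>space (M n). S n w = enat k}" for n
    using assms(2,3) by (rule prob_space.integral_indicator_singleton)
  moreover have "(\<integral>w. (indicator {enat k} (X w) :: real) \<partial>N)
      = measure N {w\<in>space N. X w = enat k}"
    using assms(4,5) by (rule prob_space.integral_indicator_singleton)
  ultimately show ?thesis
    by simp
qed

lemma (in prob_space) prob_eq_infinity_eq_1:
  assumes [measurable]: "X \<in> M \<rightarrow>\<^sub>M count_space UNIV"
    and null: "\<And>k. prob {w\<in>space M. X w = enat k} = 0"
  shows "prob {w\<in>space M. X w = \<infinity>} = 1"
proof -
  have "\<forall>k. AE w in M. X w \<noteq> enat k"
    using null by (subst (asm) prob_Collect_eq_0) measurable
  then have "AE w in M. \<forall>k. X w \<noteq> enat k"
    unfolding AE_all_countable .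
  then have "AE w in M. X w = \<infinity>"
    by simp
  then show ?thesis
    by (subst prob_Collect_eq_1) measurable
qed

theorem lemma50:
  fixes p0 :: real
    and M :: "nat \<Rightarrow> 'a measure"
    and C :: "nat \<Rightarrow> nat \<Rightarrow> 'a set"
    and N :: "'b measure"
    and Mstar :: "'b \<Rightarrow> enat"
  assumes "p0 < 1"
    and "\<And>n. prob_space (M n)"
    and "\<And>n. prob_space.indep_events (M n) (C n) UNIV"
    and "\<And>n i. measure (M n) (C n i) \<le> p0"
    and "prob_space N"
    and "Mstar \<in> measurable N (count_space UNIV)"
    and "conv_distr_enat M (\<lambda>n. count_events (C n)) N Mstar"
  shows "measure N {w \<in> space N. Mstar w = 0} > 0
         \<or> measure N {w \<in> space N. Mstar w = \<infinity>} = 1"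
proof (cases "measure N {w \<in> space N. Mstar w = 0} = 0")
  case False
  then show ?thesis
    using measure_nonneg[of N "{w \<in> space N. Mstar w = 0}"] by (simp add: order_less_le)
next
  case True
  define a where "a n k = measure (M n) {w\<in>space (M n). count_events (C n) w = enat k}" for n k
  define b where "b k = measure N {w\<in>space N. Mstar w = enat k}" for k
  have "count_events (C n) \<in> M n \<rightarrow>\<^sub>M count_space UNIV" for n
    using assms(3)[of n]
    by (intro measurable_count_events) (auto simp: prob_space.indep_events_def[OF assms(2)])
  then have a_tendsto: "(\<lambda>n. a n k) \<longlonglongrightarrow> b k" for k
    unfolding a_def b_def using assms(2,5,6,7) by (intro conv_distr_enat_tendsto_prob)
  have a_bound: "(((1 - p0) / 2) ^ k * a n k)\<^sup>2 \<le> a n 0" for n k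
    using prob_space.prob_count_events_eq_bound[OF assms(2,3,4,1)] by (simp add: a_def zero_enat_def)
  have "b k = 0" for k
  proof -
    have "(\<lambda>n. (((1 - p0) / 2) ^ k * a n k)\<^sup>2) \<longlonglongrightarrow> (((1 - p0) / 2) ^ k * b k)\<^sup>2"
      by (intro tendsto_intros a_tendsto)
    then have "(((1 - p0) / 2) ^ k * b k)\<^sup>2 \<le> b 0"
      using a_bound by (intro LIMSEQ_le[OF _ a_tendsto]) auto
    then show ?thesis
      using True \<open>p0 < 1\<close> by (simp add: b_def zero_enat_def)
  qed
  then have "measure N {w \<in> space N. Mstar w = \<infinity>} = 1"
    using assms(5,6) by (intro prob_space.prob_eq_infinity_eq_1) (simp_all add: b_def)
  then show ?thesis ..
qed

end
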